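(* Let $q\ge2$ be even, $n\ge1$, $k\in[1,n]$, $V\subseteq\Sigma_q^n$ and $\boldsymbol{x}\in V$. Let $N_k(\boldsymbol{x};V)=\{\boldsymbol{z}\in V:\boldsymbol{z}\ne\boldsymbol{x},\ RC_k^1(\boldsymbol{z})\cap RC_k^1(\boldsymbol{x})\ne\varnothing\}$. Then $\#N_k(\boldsymbol{x};V)\le n(n-k+1)-1$.
   Context: $\Sigma_q=\{0,\dots,q-1\}$. A complement operation is a fixed bijection $a\mapsto\overline{a}$ on $\Sigma_q$ with $\overline{a}\ne a$, $\overline{\overline{a}}=a$; $\boldsymbol{v}^{RC}=\overline{v_k}\cdots\overline{v_1}$ for $\boldsymbol{v}=v_1\cdots v_k$. For $\boldsymbol{x}=\boldsymbol{u}\boldsymbol{v}\boldsymbol{w}\in\Sigma_q^n$ with $|\boldsymbol{u}|=i-1$, $|\boldsymbol{v}|=k$, $RC_{k,i}(\boldsymbol{x})=\boldsymbol{u}\boldsymbol{v}\boldsymbol{v}^{RC}\boldsymbol{w}$, and $RC_k^1(\boldsymbol{x})=\{RC_{k,i}(\boldsymbol{x}):i\in[1,n-k+1]\}$. *)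

theory Defs
  imports Main
begin

definition is_complement :: "nat \<Rightarrow> (nat \<Rightarrow> nat) \<Rightarrow> bool" where
  "is_complement q c \<longleftrightarrow> bij_betw c {0..<q} {0..<q}
     \<and> (\<forall>a\<in>{0..<q}. c a \<noteq> a \<and> c (c a) = a)"

definition rc :: "(nat \<Rightarrow> nat) \<Rightarrow> nat list \<Rightarrow> nat list" where
  "rc c v = rev (map c v)"

text \<open>RC_{k,i}(x) = u v v^RC w with |u| = i-1, |v| = k (1-based i).\<close>
definition RC_dup :: "(nat \<Rightarrow> nat) \<Rightarrow> nat \<Rightarrow> nat \<Rightarrow> nat list \<Rightarrow> nat list" where
  "RC_dup c k i x = (let u = take (i - 1) x; v = take k (drop (i - 1) x);
                        w = drop (i - 1 + k) x in u @ v @ rc c v @ w)"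

definition RC1 :: "(nat \<Rightarrow> nat) \<Rightarrow> nat \<Rightarrow> nat list \<Rightarrow> nat list set" where
  "RC1 c k x = {RC_dup c k i x | i. i \<in> {1..length x - k + 1}}"

definition strings :: "nat \<Rightarrow> nat \<Rightarrow> nat list set" where
  "strings q n = {x. length x = n \<and> set x \<subseteq> {0..<q}}"

definition N_nbhd :: "(nat \<Rightarrow> nat) \<Rightarrow> nat \<Rightarrow> nat list \<Rightarrow> nat list set \<Rightarrow> nat list set" where
  "N_nbhd c k x V = {z \<in> V. z \<noteq> x \<and> RC1 c k z \<inter> RC1 c k x \<noteq> {}}"

end

theory Submission
  imports Defs
begin

text \<open>A string z of length at least k is recovered from RC_{k,i}(z) by deleting the k symbols
of the inserted reverse complement. Hence every z whose RC_k^1-ball meets that of x is the image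
of a pair (i, y) with i a position and y in RC_k^1(x); there are at most (n - k + 1)^2 such pairs,
and x itself is one of the images.\<close>

definition RC_undup :: "nat \<Rightarrow> nat \<Rightarrow> nat list \<Rightarrow> nat list" where
  "RC_undup k i y = take (i - 1 + k) y @ drop (i - 1 + 2 * k) y"

definition RC_confusable :: "(nat \<Rightarrow> nat) \<Rightarrow> nat \<Rightarrow> nat list \<Rightarrow> nat list set" where
  "RC_confusable c k x = {z. length z = length x \<and> RC1 c k z \<inter> RC1 c k x \<noteq> {}}"

lemma RC_undup_RC_dup:
  assumes "i - 1 + k \<le> length z"
  shows "RC_undup k i (RC_dup c k i z) = z"
proof -
  let ?u = "take (i - 1) z" and ?v = "take k (drop (i - 1) z)" and ?w = "drop (i - 1 + k) z"
  have "length ?u = i - 1" "length ?v = k" "length (rc c ?v) = k"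
    using assms by (auto simp: rc_def)
  then have "RC_undup k i ((?u @ ?v) @ rc c ?v @ ?w) = (?u @ ?v) @ ?w"
    by (simp add: RC_undup_def)
  also have "\<dots> = z"
    by (metis add.commute append_assoc append_take_drop_id drop_drop take_add)
  finally show ?thesis
    by (simp add: RC_dup_def Let_def)
qed

lemma RC1_eq_image: "RC1 c k x = (\<lambda>i. RC_dup c k i x) ` {1..length x - k + 1}"
  by (auto simp: RC1_def)

lemma finite_RC1: "finite (RC1 c k x)"
  by (simp add: RC1_eq_image)

lemma card_RC1_le: "card (RC1 c k x) \<le> length x - k + 1"
  unfolding RC1_eq_image using card_image_le[of "{1..length x - k + 1}"] by simp

lemma self_in_RC_confusable: "x \<in> RC_confusable c k x"
  by (auto simp: RC_confusable_def RC1_eq_image)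

lemma RC_confusable_subset_RC_undup_image:
  assumes "k \<le> length x"
  shows "RC_confusable c k x
    \<subseteq> (\<lambda>(i, y). RC_undup k i y) ` ({1..length x - k + 1} \<times> RC1 c k x)"
proof
  fix z assume "z \<in> RC_confusable c k x"
  then obtain y where lz: "length z = length x" and "y \<in> RC1 c k z" and y: "y \<in> RC1 c k x"
    by (auto simp: RC_confusable_def)
  then obtain i where i: "i \<in> {1..length x - k + 1}" and "y = RC_dup c k i z"
    by (auto simp: RC1_eq_image)
  moreover from i assms lz have "i - 1 + k \<le> length z"
    by auto
  ultimately have "RC_undup k i y = z"
    by (simp add: RC_undup_RC_dup)
  with i y show "z \<in> (\<lambda>(i, y). RC_undup k i y) ` ({1..length x - k + 1} \<times> RC1 c k x)"
    by force
qed

lemma finite_RC_confusable: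
  assumes "k \<le> length x"
  shows "finite (RC_confusable c k x)"
  using finite_subset[OF RC_confusable_subset_RC_undup_image[OF assms]] finite_RC1 by blast

lemma card_RC_confusable_le:
  assumes "k \<le> length x"
  shows "card (RC_confusable c k x - {x}) \<le> (length x - k + 1)^2 - 1"
proof -
  let ?P = "{1..length x - k + 1} \<times> RC1 c k x"
  have "card (RC_confusable c k x) \<le> card ((\<lambda>(i, y). RC_undup k i y) ` ?P)"
    using RC_confusable_subset_RC_undup_image[OF assms] finite_RC1 by (intro card_mono) auto
  also have "\<dots> \<le> card ?P"
    using finite_RC1 by (intro card_image_le) simp
  also have "\<dots> = (length x - k + 1) * card (RC1 c k x)"
    by (simp add: card_cartesian_product)
  also have "\<dots> \<le> (length x - k + 1)^2"
    unfolding power2_eq_square using card_RC1_le[of c k x] by (rule mult_left_mono) simp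
  finally show ?thesis
    using finite_RC_confusable[OF assms] self_in_RC_confusable
    by (simp add: card_Diff_singleton diff_le_mono)
qed

theorem lemma6:
  fixes q n k :: nat and c :: "nat \<Rightarrow> nat" and V :: "nat list set" and x :: "nat list"
  assumes "q \<ge> 2" and "even q" and "is_complement q c"
    and "n \<ge> 1" and "1 \<le> k" and "k \<le> n"
    and "V \<subseteq> strings q n" and "x \<in> V"
  shows "card (N_nbhd c k x V) \<le> n * (n - k + 1) - 1"
proof -
  have lengths: "\<And>z. z \<in> V \<Longrightarrow> length z = n"
    using assms(7) by (auto simp: strings_def)
  then have lx: "k \<le> length x"
    using assms(6,8) by simp
  have "N_nbhd c k x V \<subseteq> RC_confusable c k x - {x}"
    using lengths assms(8) by (auto simp: N_nbhd_def RC_confusable_def)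
  then have "card (N_nbhd c k x V) \<le> card (RC_confusable c k x - {x})"
    using finite_RC_confusable[OF lx] by (intro card_mono) auto
  also have "\<dots> \<le> (n - k + 1)^2 - 1"
    using card_RC_confusable_le[OF lx] lengths assms(8) by simp
  also have "\<dots> \<le> n * (n - k + 1) - 1"
  proof -
    have "(n - k + 1) * (n - k + 1) \<le> n * (n - k + 1)"
      using assms(5,6) by (intro mult_right_mono) auto
    then show ?thesis
      unfolding power2_eq_square by (rule diff_le_mono)
  qed
  finally show ?thesis .
qed

end
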